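(* Let $B,U\ge 1$, $\mathbf{H}\in\mathbb{C}^{B\times U}$, $\mathbf{j}\in\mathbb{C}^B$, and let $\mathbf{y}=\mathbf{H}\mathbf{s}+\mathbf{j}w+\mathbf{n}\in\mathbb{C}^B$, where $\mathbf{s}\in\mathbb{C}^U$ has independent zero-mean entries with $\mathbb{E}[\mathbf{s}\mathbf{s}^H]=E_s\mathbf{I}_U$, $w$ is circularly-symmetric complex Gaussian with variance $E_J$, $\mathbf{n}$ is i.i.d. circularly-symmetric complex Gaussian with per-entry variance $N_0$, and $\mathbf{s},w,\mathbf{n}$ are mutually independent. Let $\mathcal{A},\mathcal{B}\subset\mathbb{C}$ and set $$\mathbf{C}_{\mathbf{y}}=E_s\mathbf{H}\mathbf{H}^H+E_J\mathbf{j}\mathbf{j}^H+N_0\mathbf{I}_B,$$ the covariance matrix of $\mathbf{y}$. Consider the optimization problem $$\{\hat\beta,\hat{\mathbf{b}},\hat{\mathbf{a}}\}=\arg\min_{\beta\in\mathbb{C},\,\mathbf{b}\in\mathcal{B}^B,\,\mathbf{a}\in\mathcal{A}^B}\ \mathbb{E}_{\mathbf{s},w,\mathbf{n}}\big[\|\beta\mathbf{b}\mathbf{a}^H\mathbf{y}-\mathbf{j}w\|^2\big].$$ Then this problem is separable in $\mathbf{b}$ and $\mathbf{a}$, and its solution is given by $$\hat{\mathbf{b}}=\arg\max_{\mathbf{b}\in\mathcal{B}^B}\frac{|\mathbf{j}^H\mathbf{b}|^2}{\|\mathbf{b}\|^2},\qquad \hat{\mathbf{a}}=\arg\max_{\mathbf{a}\in\mathcal{A}^B}\frac{|\mathbf{j}^H\mathbf{a}|^2}{\mathbf{a}^H\mathbf{C}_{\mathbf{y}}\mathbf{a}},\qquad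 \hat\beta=\frac{E_J\,\mathbf{j}^H\hat{\mathbf{a}}\,\hat{\mathbf{b}}^H\mathbf{j}}{\|\hat{\mathbf{b}}\|^2\,\hat{\mathbf{a}}^H\mathbf{C}_{\mathbf{y}}\hat{\mathbf{a}}}.$$
   Context: This arises in choosing an analog transform of the form $\mathbf{P}=\mathbf{I}_B-\beta\mathbf{b}\mathbf{a}^H$ applied to the received vector $\mathbf{y}$ of a multi-antenna receiver with $B$ antennas, $U$ users with channel matrix $\mathbf{H}$, and a jammer with channel $\mathbf{j}$ and transmit signal $w$; minimizing the objective above is equivalent to minimizing $\mathbb{E}\|\mathbf{P}\mathbf{y}-(\mathbf{H}\mathbf{s}+\mathbf{n})\|^2$. $\|\cdot\|$ is the Euclidean norm and $(\cdot)^H$ the conjugate transpose. *)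

theory Defs
  imports "HOL-Probability.Probability"
begin

definition cinner :: "complex^'n \<Rightarrow> complex^'n \<Rightarrow> complex" where
  "cinner a y = (\<Sum>i\<in>UNIV. cnj (a $ i) * y $ i)"

definition cscg :: "'a measure \<Rightarrow> ('a \<Rightarrow> complex) \<Rightarrow> real \<Rightarrow> bool" where
  "cscg M X v \<longleftrightarrow> 0 < v \<and>
     distributed M lborel (\<lambda>x. Re (X x)) (normal_density 0 (sqrt (v / 2))) \<and>
     distributed M lborel (\<lambda>x. Im (X x)) (normal_density 0 (sqrt (v / 2))) \<and>
     prob_space.indep_var M borel (\<lambda>x. Re (X x)) borel (\<lambda>x. Im (X x))"

definition Cy :: "real \<Rightarrow> complex^'u^'b \<Rightarrow> real \<Rightarrow> complex^'b \<Rightarrow> real \<Rightarrow> complex^'b^'b" where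
  "Cy Es H EJ j N0 = (\<chi> i k. of_real Es * (\<Sum>u\<in>UNIV. H $ i $ u * cnj (H $ k $ u))
                          + of_real EJ * j $ i * cnj (j $ k)
                          + (if i = k then of_real N0 else 0))"

definition rx :: "complex^'u^'b \<Rightarrow> complex^'u \<Rightarrow> complex^'b \<Rightarrow> complex \<Rightarrow> complex^'b \<Rightarrow> complex^'b" where
  "rx H s j w n = H *v s + w *s j + n"

definition objective :: "'a measure \<Rightarrow> complex^'u^'b \<Rightarrow> complex^'b \<Rightarrow> ('a \<Rightarrow> complex^'u)
    \<Rightarrow> ('a \<Rightarrow> complex) \<Rightarrow> ('a \<Rightarrow> complex^'b) \<Rightarrow> complex \<Rightarrow> complex^'b \<Rightarrow> complex^'b \<Rightarrow> real" where
  "objective M H j s w n \<beta> b a =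
     integral\<^sup>L M (\<lambda>x. (norm ((\<beta> * cinner a (rx H (s x) j (w x) (n x))) *s b - w x *s j))\<^sup>2)"

definition indep3 :: "'a measure \<Rightarrow> ('a \<Rightarrow> 'x::topological_space) \<Rightarrow> ('a \<Rightarrow> 'y::topological_space)
    \<Rightarrow> ('a \<Rightarrow> 'z::topological_space) \<Rightarrow> bool" where
  "indep3 M X Y Z \<longleftrightarrow>
     X \<in> borel_measurable M \<and> Y \<in> borel_measurable M \<and> Z \<in> borel_measurable M \<and>
     prob_space.indep_sets M
       (\<lambda>i::nat. if i = 0 then sigma_sets (space M) {X -` A \<inter> space M | A. A \<in> sets borel}
                 else if i = 1 then sigma_sets (space M) {Y -` A \<inter> space M | A. A \<in> sets borel}
                 else sigma_sets (space M) {Z -` A \<inter> space M | A. A \<in> sets borel})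
       {0, 1, 2}"

end

theory Submission
  imports Defs
begin

(* With z = a^H y, the objective E ||beta z b - w j||^2 is a quadratic polynomial in beta whose
   coefficients are the second moments E|z|^2, E[z w^*] and E|w|^2.  Since the entries of s, w
   and n are pairwise uncorrelated, the entries of y have correlation matrix C_y, so
   E|z|^2 = a^H C_y a and E[z w^*] = E_J a^H j.  Completing the square in beta shows that the
   minimum over beta is
     E_J ||j||^2 - E_J^2 * (|j^H b|^2 / ||b||^2) * (|j^H a|^2 / a^H C_y a),
   attained at beta-hat; the b- and a-dependence separate into two nonnegative factors,
   which are maximised independently. *)

lemma cnj_cinner: "cnj (cinner x y) = cinner y x"
  by (simp add: cinner_def cnj_sum mult.commute)

lemma cmod_cinner_commute: "cmod (cinner x y) = cmod (cinner y x)"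
  by (metis cnj_cinner complex_mod_cnj)

lemma norm_vec_square: "(norm v)\<^sup>2 = (\<Sum>i\<in>UNIV. (norm (v $ i))\<^sup>2)"
  by (simp add: norm_vec_def L2_set_def sum_nonneg)

lemma rx_nth: "rx H s j w n $ i = (\<Sum>u\<in>UNIV. H $ i $ u * s $ u) + j $ i * w + n $ i"
  by (simp add: rx_def matrix_vector_mult_def mult.commute)

lemma borel_measurable_vec_nth: "(\<lambda>v::'a::topological_space^'n. v $ i) \<in> borel_measurable borel"
  by (intro borel_measurable_continuous_onI continuous_on_component continuous_on_id)

lemma borel_measurable_cnj [measurable (raw)]:
  "X \<in> borel_measurable M \<Longrightarrow> (\<lambda>x. cnj (X x)) \<in> borel_measurable M"
  by (simp add: borel_measurable_complex_iff)

definition square_integrable :: "'a measure \<Rightarrow> ('a \<Rightarrow> complex) \<Rightarrow> bool" where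
  "square_integrable M X \<longleftrightarrow> X \<in> borel_measurable M \<and> integrable M (\<lambda>x. (cmod (X x))\<^sup>2)"

definition correlation :: "'a measure \<Rightarrow> ('a \<Rightarrow> complex) \<Rightarrow> ('a \<Rightarrow> complex) \<Rightarrow> complex" where
  "correlation M X Y = (\<integral>x. X x * cnj (Y x) \<partial>M)"

lemma integrable_mult_cnj:
  assumes "square_integrable M X" "square_integrable M Y"
  shows "integrable M (\<lambda>x. X x * cnj (Y x))"
proof (rule Bochner_Integration.integrable_bound)
  show "integrable M (\<lambda>x. (cmod (X x))\<^sup>2 + (cmod (Y x))\<^sup>2)"
    using assms by (simp add: square_integrable_def)
  show "(\<lambda>x. X x * cnj (Y x)) \<in> borel_measurable M"
    using assms unfolding square_integrable_def by (intro borel_measurable_times borel_measurable_cnj) auto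
  have "cmod (X x) * cmod (Y x) \<le> (cmod (X x))\<^sup>2 + (cmod (Y x))\<^sup>2" for x
    using sum_squares_bound[of "cmod (X x)" "cmod (Y x)"]
      mult_nonneg_nonneg[OF norm_ge_zero norm_ge_zero, of "X x" "Y x"]
    unfolding power2_eq_square by linarith
  then show "AE x in M. norm (X x * cnj (Y x)) \<le> norm ((cmod (X x))\<^sup>2 + (cmod (Y x))\<^sup>2)"
    by (simp add: norm_mult)
qed

lemma square_integrable_add [simp]:
  assumes "square_integrable M X" "square_integrable M Y"
  shows "square_integrable M (\<lambda>x. X x + Y x)"
proof -
  have [measurable]: "X \<in> borel_measurable M" "Y \<in> borel_measurable M"
    using assms by (simp_all add: square_integrable_def)
  have bound: "(cmod (X x + Y x))\<^sup>2 \<le> 2 * (cmod (X x))\<^sup>2 + 2 * (cmod (Y x))\<^sup>2" for x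
  proof -
    have "(cmod (X x + Y x))\<^sup>2 \<le> (cmod (X x) + cmod (Y x))\<^sup>2"
      by (simp add: power_mono norm_triangle_ineq)
    then show ?thesis
      using sum_squares_bound[of "cmod (X x)" "cmod (Y x)"] by (simp add: power2_sum)
  qed
  have "integrable M (\<lambda>x. 2 * (cmod (X x))\<^sup>2 + 2 * (cmod (Y x))\<^sup>2)"
    using assms by (simp add: square_integrable_def)
  moreover have "(\<lambda>x. (cmod (X x + Y x))\<^sup>2) \<in> borel_measurable M"
    by measurable
  ultimately have "integrable M (\<lambda>x. (cmod (X x + Y x))\<^sup>2)"
    by (rule Bochner_Integration.integrable_bound) (simp add: bound)
  then show ?thesis
    by (simp add: square_integrable_def)
qed

lemma square_integrable_mult [simp]:
  "square_integrable M X \<Longrightarrow> square_integrable M (\<lambda>x. c * X x)"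
  by (auto simp: square_integrable_def norm_mult power_mult_distrib)

lemma square_integrable_zero [simp]: "square_integrable M (\<lambda>x. 0)"
  by (simp add: square_integrable_def)

lemma square_integrable_sum [simp]:
  "(\<And>i. i \<in> I \<Longrightarrow> square_integrable M (X i)) \<Longrightarrow> square_integrable M (\<lambda>x. \<Sum>i\<in>I. X i x)"
  by (induction I rule: infinite_finite_induct) auto

lemma correlation_swap: "correlation M Y X = cnj (correlation M X Y)"
  unfolding correlation_def Bochner_Integration.integral_cnj[symmetric] by (simp add: mult.commute)

lemma correlation_eq_0_commute: "correlation M Y X = 0 \<longleftrightarrow> correlation M X Y = 0"
  by (subst correlation_swap) simp

lemma correlation_add_left:
  assumes "square_integrable M X" "square_integrable M Y" "square_integrable M Z"
  shows "correlation M (\<lambda>x. X x + Y x) Z = correlation M X Z + correlation M Y Z"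
  using assms by (simp add: correlation_def distrib_right integrable_mult_cnj)

lemma correlation_add_right:
  assumes "square_integrable M X" "square_integrable M Y" "square_integrable M Z"
  shows "correlation M Z (\<lambda>x. X x + Y x) = correlation M Z X + correlation M Z Y"
  using assms by (subst (1 2 3) correlation_swap) (simp add: correlation_add_left)

lemma correlation_mult_left: "correlation M (\<lambda>x. c * X x) Z = c * correlation M X Z"
  by (simp add: correlation_def mult.assoc)

lemma correlation_mult_right: "correlation M Z (\<lambda>x. c * X x) = cnj c * correlation M Z X"
  by (subst (1 2) correlation_swap) (simp add: correlation_mult_left)

lemma correlation_sum_left:
  assumes "finite I" "\<And>i. i \<in> I \<Longrightarrow> square_integrable M (X i)" "square_integrable M Z"
  shows "correlation M (\<lambda>x. \<Sum>i\<in>I. X i x) Z = (\<Sum>i\<in>I. correlation M (X i) Z)"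
  using assms by (simp add: correlation_def sum_distrib_right integrable_mult_cnj)

lemma correlation_sum_right:
  assumes "finite I" "\<And>i. i \<in> I \<Longrightarrow> square_integrable M (X i)" "square_integrable M Z"
  shows "correlation M Z (\<lambda>x. \<Sum>i\<in>I. X i x) = (\<Sum>i\<in>I. correlation M Z (X i))"
  using assms by (subst (1 2) correlation_swap) (simp add: correlation_sum_left)

lemma correlation_self: "correlation M X X = of_real (\<integral>x. (cmod (X x))\<^sup>2 \<partial>M)"
  unfolding correlation_def complex_norm_square[symmetric] integral_complex_of_real ..

lemma correlation_eq_0_if_self_eq_0:
  assumes "square_integrable M X" "correlation M X X = 0"
  shows "correlation M X Y = 0"
proof -
  have "AE x in M. (cmod (X x))\<^sup>2 = 0"
    using assms by (simp add: correlation_self integral_nonneg_eq_0_iff_AE square_integrable_def)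
  then have "AE x in M. X x * cnj (Y x) = 0"
    by eventually_elim simp
  then show ?thesis
    unfolding correlation_def by (simp add: integral_eq_zero_AE)
qed

lemma Re_correlation_linear_combination:
  assumes Z: "square_integrable M Z" and W: "square_integrable M W"
  shows "Re (correlation M (\<lambda>x. c * Z x + d * W x) (\<lambda>x. c * Z x + d * W x)) =
    (cmod c)\<^sup>2 * Re (correlation M Z Z) + 2 * Re (c * cnj d * correlation M Z W)
    + (cmod d)\<^sup>2 * Re (correlation M W W)"
proof -
  have "correlation M (\<lambda>x. c * Z x + d * W x) (\<lambda>x. c * Z x + d * W x) =
      c * cnj c * correlation M Z Z + c * cnj d * correlation M Z W
      + cnj (c * cnj d * correlation M Z W) + d * cnj d * correlation M W W"
    using Z W
    by (simp only: correlation_add_left correlation_add_right correlation_mult_left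
        correlation_mult_right correlation_swap[of M W Z] square_integrable_add square_integrable_mult)
      (simp add: algebra_simps)
  then show ?thesis
    unfolding complex_norm_square[symmetric] by (simp add: algebra_simps)
qed

lemma integral_norm_diff_square:
  fixes b j :: "complex^'n"
  assumes Z: "square_integrable M Z" and W: "square_integrable M W"
  shows "(\<integral>x. (norm ((\<beta> * Z x) *s b - W x *s j))\<^sup>2 \<partial>M) =
    (cmod \<beta>)\<^sup>2 * (norm b)\<^sup>2 * Re (correlation M Z Z)
    - 2 * Re (\<beta> * cinner j b * correlation M Z W) + (norm j)\<^sup>2 * Re (correlation M W W)"
proof -
  define V where "V i x = (\<beta> * b $ i) * Z x + (- j $ i) * W x" for i x
  have V: "square_integrable M (V i)" for i
    unfolding V_def using Z W by (intro square_integrable_add square_integrable_mult)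
  have "(\<integral>x. (norm ((\<beta> * Z x) *s b - W x *s j))\<^sup>2 \<partial>M) = (\<integral>x. (\<Sum>i\<in>UNIV. (cmod (V i x))\<^sup>2) \<partial>M)"
    by (simp add: norm_vec_square V_def algebra_simps)
  also have "\<dots> = (\<Sum>i\<in>UNIV. Re (correlation M (V i) (V i)))"
    using V by (simp add: correlation_self square_integrable_def)
  also have "\<dots> = (\<Sum>i\<in>UNIV. (cmod \<beta>)\<^sup>2 * (cmod (b $ i))\<^sup>2 * Re (correlation M Z Z)
      - 2 * Re (\<beta> * (b $ i * cnj (j $ i)) * correlation M Z W) + (cmod (j $ i))\<^sup>2 * Re (correlation M W W))"
    unfolding V_def Re_correlation_linear_combination[OF Z W]
    by (simp add: norm_mult power_mult_distrib algebra_simps)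
  also have "\<dots> = (cmod \<beta>)\<^sup>2 * (norm b)\<^sup>2 * Re (correlation M Z Z)
    - 2 * Re (\<beta> * cinner j b * correlation M Z W) + (norm j)\<^sup>2 * Re (correlation M W W)"
    by (simp add: sum.distrib sum_subtractf norm_vec_square cinner_def sum_distrib_left
        sum_distrib_right Re_sum[symmetric] mult_ac)
  finally show ?thesis .
qed

context prob_space
begin

lemma indep_var_correlation_eq_0:
  assumes "indep_var borel X borel Y" "integrable M X" "integrable M Y" "expectation Y = 0"
  shows "correlation M X Y = 0"
proof -
  have "indep_var borel X borel (\<lambda>x. cnj (Y x))"
    using indep_var_compose[OF assms(1), of id borel cnj borel] by (simp add: comp_def borel_measurable_cnj)
  then show ?thesis
    using assms(2-4) by (simp add: correlation_def indep_var_lebesgue_integral)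
qed

lemma indep_sets_imp_indep_set:
  assumes indep: "indep_sets F I" and "i \<in> I" "k \<in> I" "i \<noteq> k"
  shows "indep_set (F i) (F k)"
  unfolding indep_sets2_eq
proof (intro conjI ballI)
  show "F i \<subseteq> events" "F k \<subseteq> events"
    using indep \<open>i \<in> I\<close> \<open>k \<in> I\<close> by (auto simp: indep_sets_def)
  fix a b assume "a \<in> F i" "b \<in> F k"
  then have "prob (\<Inter>l\<in>{i, k}. if l = i then a else b) = (\<Prod>l\<in>{i, k}. prob (if l = i then a else b))"
    using assms by (intro indep_setsD[OF indep]) auto
  then show "prob (a \<inter> b) = prob a * prob b"
    using \<open>i \<noteq> k\<close> by (simp add: Int_commute)
qed

lemma indep_vars_imp_indep_var:
  assumes "indep_vars M' X I" "i \<in> I" "k \<in> I" "i \<noteq> k"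
  shows "indep_var (M' i) (X i) (M' k) (X k)"
proof -
  have indep: "indep_sets (\<lambda>i. sigma_sets (space M) {X i -` A \<inter> space M | A. A \<in> sets (M' i)}) I"
    and "random_variable (M' i) (X i)" "random_variable (M' k) (X k)"
    using assms by (simp_all add: indep_vars_def)
  then show ?thesis
    unfolding indep_var_eq using indep_sets_imp_indep_set[OF indep assms(2-4)] by simp
qed

lemma indep3_imp_indep_set:
  assumes "indep3 M X Y Z"
  shows "indep_set (sigma_sets (space M) {X -` A \<inter> space M | A. A \<in> sets borel})
      (sigma_sets (space M) {Y -` A \<inter> space M | A. A \<in> sets borel})"
    "indep_set (sigma_sets (space M) {X -` A \<inter> space M | A. A \<in> sets borel})
      (sigma_sets (space M) {Z -` A \<inter> space M | A. A \<in> sets borel})"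
    "indep_set (sigma_sets (space M) {Y -` A \<inter> space M | A. A \<in> sets borel})
      (sigma_sets (space M) {Z -` A \<inter> space M | A. A \<in> sets borel})"
proof -
  note indep = assms[unfolded indep3_def, THEN conjunct2, THEN conjunct2, THEN conjunct2]
  show "indep_set (sigma_sets (space M) {X -` A \<inter> space M | A. A \<in> sets borel})
      (sigma_sets (space M) {Y -` A \<inter> space M | A. A \<in> sets borel})"
    using indep_sets_imp_indep_set[OF indep, of 0 1] by simp
  show "indep_set (sigma_sets (space M) {X -` A \<inter> space M | A. A \<in> sets borel})
      (sigma_sets (space M) {Z -` A \<inter> space M | A. A \<in> sets borel})"
    using indep_sets_imp_indep_set[OF indep, of 0 2] by simp
  show "indep_set (sigma_sets (space M) {Y -` A \<inter> space M | A. A \<in> sets borel})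
      (sigma_sets (space M) {Z -` A \<inter> space M | A. A \<in> sets borel})"
    using indep_sets_imp_indep_set[OF indep, of 1 2] by simp
qed

text \<open>\<open>indep_var\<close> only relates random variables with values in one common type, so the
  independence of variables of different types is carried by their generated \<open>\<sigma>\<close>-algebras.\<close>

lemma indep_var_compose_indep_set:
  fixes f :: "'b::topological_space \<Rightarrow> 'd::topological_space"
    and g :: "'c::topological_space \<Rightarrow> 'd"
  assumes indep: "indep_set (sigma_sets (space M) {X -` A \<inter> space M | A. A \<in> sets borel})
      (sigma_sets (space M) {Y -` A \<inter> space M | A. A \<in> sets borel})"
    and X: "random_variable borel X" and Y: "random_variable borel Y"
    and f: "f \<in> borel_measurable borel" and g: "g \<in> borel_measurable borel"
  shows "indep_var borel (\<lambda>x. f (X x)) borel (\<lambda>x. g (Y x))"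
proof -
  have generated_subset: "sigma_sets (space M) {(\<lambda>x. h (V x)) -` A \<inter> space M | A. A \<in> sets borel}
      \<subseteq> sigma_sets (space M) {V -` A \<inter> space M | A. A \<in> sets borel}"
    if "h \<in> borel_measurable borel" for h :: "'e::topological_space \<Rightarrow> 'd" and V
  proof (rule sigma_sets_mono', safe)
    fix A :: "'d set"
    assume "A \<in> sets borel"
    then have "h -` A \<in> sets borel"
      using measurable_sets[OF that, of A] by simp
    then show "\<exists>B. (\<lambda>x. h (V x)) -` A \<inter> space M = V -` B \<inter> space M \<and> B \<in> sets borel"
      by (intro exI[of _ "h -` A"]) auto
  qed
  have "indep_set (sigma_sets (space M) {(\<lambda>x. f (X x)) -` A \<inter> space M | A. A \<in> sets borel})
      (sigma_sets (space M) {(\<lambda>x. g (Y x)) -` A \<inter> space M | A. A \<in> sets borel})"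
    unfolding indep_set_def using indep[unfolded indep_set_def]
    by (rule indep_sets_mono_sets) (simp split: bool.split add: generated_subset f g)
  moreover have "random_variable borel (\<lambda>x. f (X x))" "random_variable borel (\<lambda>x. g (Y x))"
    using measurable_compose[OF X f] measurable_compose[OF Y g] .
  ultimately show ?thesis
    unfolding indep_var_eq by blast
qed

lemma centered_normal_moments:
  assumes X: "distributed M lborel X (normal_density 0 \<sigma>)" and "0 < \<sigma>"
  shows "integrable M X" "expectation X = 0"
    "integrable M (\<lambda>x. (X x)\<^sup>2)" "expectation (\<lambda>x. (X x)\<^sup>2) = \<sigma>\<^sup>2"
proof -
  show "integrable M X"
    using integrable_normal_moment_nz_1[OF \<open>0 < \<sigma>\<close>, of 0]
    by (subst distributed_integrable[OF X, of "\<lambda>x. x", symmetric]) auto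
  show "expectation X = 0"
    using normal_distributed_expectation[OF \<open>0 < \<sigma>\<close> X] .
  then show "expectation (\<lambda>x. (X x)\<^sup>2) = \<sigma>\<^sup>2"
    using normal_distributed_variance[OF \<open>0 < \<sigma>\<close> X] by simp
  show "integrable M (\<lambda>x. (X x)\<^sup>2)"
    using integrable_normal_moment[OF \<open>0 < \<sigma>\<close>, of 0 2]
    by (subst distributed_integrable[OF X, of "\<lambda>x. x\<^sup>2", symmetric]) auto
qed

lemma cscg_moments:
  assumes "cscg M W v"
  shows "square_integrable M W" "integrable M W" "expectation W = 0"
    "correlation M W W = of_real v"
proof -
  have "0 < v"
    and Re_W: "distributed M lborel (\<lambda>x. Re (W x)) (normal_density 0 (sqrt (v / 2)))"
    and Im_W: "distributed M lborel (\<lambda>x. Im (W x)) (normal_density 0 (sqrt (v / 2)))"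
    using assms by (auto simp: cscg_def)
  then have "0 < sqrt (v / 2)" by simp
  note Re_moments = centered_normal_moments[OF Re_W this]
    and Im_moments = centered_normal_moments[OF Im_W this]
  have W_eq: "W = (\<lambda>x. complex_of_real (Re (W x)) + \<i> * complex_of_real (Im (W x)))"
    by (rule ext) (simp add: complex_eq_iff)
  show "integrable M W" "expectation W = 0"
    using Re_moments(1,2) Im_moments(1,2) by (subst W_eq; simp)+
  have norm_W: "(cmod (W x))\<^sup>2 = (Re (W x))\<^sup>2 + (Im (W x))\<^sup>2" for x
    by (rule cmod_power2)
  show "square_integrable M W"
    using \<open>integrable M W\<close> Re_moments(3) Im_moments(3)
    by (simp add: square_integrable_def norm_W borel_measurable_integrable)
  have "(\<integral>x. (cmod (W x))\<^sup>2 \<partial>M) = v"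
    using Re_moments(3,4) Im_moments(3,4) \<open>0 < v\<close> by (simp add: norm_W)
  then show "correlation M W W = of_real v"
    by (simp add: correlation_self)
qed

end

lemma complex_quadratic_lower_bound:
  fixes \<beta> c :: complex and K :: real
  assumes "0 \<le> K" "K = 0 \<Longrightarrow> c = 0"
  shows "- ((cmod c)\<^sup>2 / K) \<le> (cmod \<beta>)\<^sup>2 * K - 2 * Re (\<beta> * c)"
proof (cases "K = 0")
  case True
  then show ?thesis using assms by simp
next
  case False
  then have "0 < K" using assms by simp
  have "(cmod (of_real K * \<beta> - cnj c))\<^sup>2 = K * ((cmod \<beta>)\<^sup>2 * K - 2 * Re (\<beta> * c)) + (cmod c)\<^sup>2"
    unfolding cmod_power2 by (simp add: power2_eq_square algebra_simps)
  then have "0 \<le> K * ((cmod \<beta>)\<^sup>2 * K - 2 * Re (\<beta> * c)) + (cmod c)\<^sup>2"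
    by (metis zero_le_power2)
  then show ?thesis
    using \<open>0 < K\<close> by (simp add: field_simps)
qed

text \<open>For \<open>K = 0\<close> both sides vanish, by the convention \<open>x / 0 = 0\<close>.\<close>

lemma complex_quadratic_at_minimizer:
  fixes c :: complex and K :: real
  shows "(cmod (cnj c / of_real K))\<^sup>2 * K - 2 * Re (cnj c / of_real K * c) = - ((cmod c)\<^sup>2 / K)"
proof -
  have "cnj c / of_real K * c = of_real ((cmod c)\<^sup>2 / K)"
    unfolding of_real_divide complex_norm_square by (simp add: divide_inverse mult_ac)
  then have "Re (cnj c / of_real K * c) = (cmod c)\<^sup>2 / K"
    by (simp only: Re_complex_of_real)
  moreover have "(cmod (cnj c / of_real K))\<^sup>2 * K = (cmod c)\<^sup>2 / K"
    by (simp add: norm_divide power_divide power2_eq_square)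
  ultimately show ?thesis
    by linarith
qed

locale jammer_model = prob_space M
  for M :: "'s measure"
    and H :: "complex^'u^'m" and j :: "complex^'m"
    and s :: "'s \<Rightarrow> complex^'u" and w :: "'s \<Rightarrow> complex" and n :: "'s \<Rightarrow> complex^'m"
    and Es EJ N0 :: real +
  assumes s_mean: "\<And>i. integrable M (\<lambda>x. s x $ i) \<and> integral\<^sup>L M (\<lambda>x. s x $ i) = 0"
    and s_cov: "\<And>i k. integrable M (\<lambda>x. s x $ i * cnj (s x $ k)) \<and>
                  integral\<^sup>L M (\<lambda>x. s x $ i * cnj (s x $ k)) = (if i = k then of_real Es else 0)"
    and w_gauss: "cscg M w EJ"
    and n_indep: "indep_vars (\<lambda>_. borel) (\<lambda>i x. n x $ i) UNIV"
    and n_gauss: "\<And>i. cscg M (\<lambda>x. n x $ i) N0"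
    and indep_swn: "indep3 M s w n"
begin

abbreviation received :: "'s \<Rightarrow> complex^'m" where
  "received x \<equiv> rx H (s x) j (w x) (n x)"

lemma square_integrable_signal [simp]: "square_integrable M (\<lambda>x. s x $ u)"
proof -
  have "integrable M (\<lambda>x. Re (s x $ u * cnj (s x $ u)))"
    using s_cov[of u u] by (intro integrable_Re) blast
  moreover have "Re (z * cnj z) = (cmod z)\<^sup>2" for z
    by (simp add: complex_mult_cnj cmod_power2)
  ultimately show ?thesis
    using s_mean[of u] by (simp add: square_integrable_def borel_measurable_integrable)
qed

lemma square_integrable_jammer [simp]: "square_integrable M w"
  using cscg_moments[OF w_gauss] by simp

lemma square_integrable_noise [simp]: "square_integrable M (\<lambda>x. n x $ i)"
  using cscg_moments[OF n_gauss] by simp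

lemma square_integrable_received [simp]: "square_integrable M (\<lambda>x. received x $ i)"
  by (simp add: rx_nth)

lemma correlation_signal:
  "correlation M (\<lambda>x. s x $ u) (\<lambda>x. s x $ v) = (if u = v then of_real Es else 0)"
  using s_cov[of u v] by (simp add: correlation_def)

lemma correlation_jammer: "correlation M w w = EJ"
  using cscg_moments[OF w_gauss] by simp

lemma correlation_noise: "correlation M (\<lambda>x. n x $ i) (\<lambda>x. n x $ k) = (if i = k then N0 else 0)"
proof (cases "i = k")
  case True
  then show ?thesis using cscg_moments[OF n_gauss] by simp
next
  case False
  then have "indep_var borel (\<lambda>x. n x $ i) borel (\<lambda>x. n x $ k)"
    using indep_vars_imp_indep_var[OF n_indep] by simp
  then show ?thesis
    using False cscg_moments[OF n_gauss] by (simp add: indep_var_correlation_eq_0)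
qed

lemma
  shows correlation_signal_jammer: "correlation M (\<lambda>x. s x $ u) w = 0"
    and correlation_signal_noise: "correlation M (\<lambda>x. s x $ u) (\<lambda>x. n x $ i) = 0"
    and correlation_jammer_noise: "correlation M w (\<lambda>x. n x $ i) = 0"
proof -
  have rv: "random_variable borel s" "random_variable borel w" "random_variable borel n"
    using indep_swn by (simp_all add: indep3_def)
  note indep = indep3_imp_indep_set[OF indep_swn]
  note nth = borel_measurable_vec_nth and ident = measurable_id[of borel]
  have "indep_var borel (\<lambda>x. s x $ u) borel w"
    by (rule indep_var_compose_indep_set[OF indep(1) rv(1,2) nth ident])
  then show "correlation M (\<lambda>x. s x $ u) w = 0"
    using s_mean cscg_moments[OF w_gauss] by (simp add: indep_var_correlation_eq_0)
  have "indep_var borel (\<lambda>x. s x $ u) borel (\<lambda>x. n x $ i)"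
    by (rule indep_var_compose_indep_set[OF indep(2) rv(1,3) nth nth])
  then show "correlation M (\<lambda>x. s x $ u) (\<lambda>x. n x $ i) = 0"
    using s_mean cscg_moments[OF n_gauss] by (simp add: indep_var_correlation_eq_0)
  have "indep_var borel w borel (\<lambda>x. n x $ i)"
    by (rule indep_var_compose_indep_set[OF indep(3) rv(2,3) ident nth])
  then show "correlation M w (\<lambda>x. n x $ i) = 0"
    using cscg_moments[OF w_gauss] cscg_moments[OF n_gauss] by (simp add: indep_var_correlation_eq_0)
qed

lemmas correlation_entries =
  correlation_signal correlation_jammer correlation_noise
  correlation_signal_jammer correlation_signal_noise correlation_jammer_noise
  correlation_signal_jammer[THEN correlation_eq_0_commute[THEN iffD2]]
  correlation_signal_noise[THEN correlation_eq_0_commute[THEN iffD2]]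
  correlation_jammer_noise[THEN correlation_eq_0_commute[THEN iffD2]]

lemma correlation_received:
  "correlation M (\<lambda>x. received x $ i) (\<lambda>x. received x $ k) = Cy Es H EJ j N0 $ i $ k"
  unfolding rx_nth Cy_def
  by (simp add: correlation_add_left correlation_add_right correlation_sum_left correlation_sum_right
      correlation_mult_left correlation_mult_right correlation_entries if_distrib)
    (simp add: sum_distrib_left mult_ac)

lemma square_integrable_combiner [simp]: "square_integrable M (\<lambda>x. cinner a (received x))"
  by (simp add: cinner_def)

lemma correlation_combiner:
  "correlation M (\<lambda>x. cinner a (received x)) (\<lambda>x. cinner a (received x)) = cinner a (Cy Es H EJ j N0 *v a)"
  unfolding cinner_def
  by (simp add: correlation_sum_left correlation_sum_right correlation_mult_left
      correlation_mult_right correlation_received matrix_vector_mult_def sum_distrib_left mult_ac)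

lemma correlation_combiner_jammer: "correlation M (\<lambda>x. cinner a (received x)) w = EJ * cinner a j"
  unfolding cinner_def rx_nth
  by (simp add: correlation_add_left correlation_sum_left correlation_mult_left correlation_entries)
    (simp add: sum_distrib_left mult_ac)

lemma quadratic_form_Cy:
  "cinner a (Cy Es H EJ j N0 *v a) = of_real (Re (cinner a (Cy Es H EJ j N0 *v a)))"
  "0 \<le> Re (cinner a (Cy Es H EJ j N0 *v a))"
proof -
  have "cinner a (Cy Es H EJ j N0 *v a) = of_real (\<integral>x. (cmod (cinner a (received x)))\<^sup>2 \<partial>M)"
    unfolding correlation_combiner[symmetric] by (rule correlation_self)
  moreover have "0 \<le> (\<integral>x. (cmod (cinner a (received x)))\<^sup>2 \<partial>M)"
    by (intro integral_nonneg_AE) simp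
  ultimately show "cinner a (Cy Es H EJ j N0 *v a) = of_real (Re (cinner a (Cy Es H EJ j N0 *v a)))"
    "0 \<le> Re (cinner a (Cy Es H EJ j N0 *v a))"
    by simp_all
qed

lemma cinner_eq_0_if_quadratic_form_Cy_eq_0:
  assumes "Re (cinner a (Cy Es H EJ j N0 *v a)) = 0"
  shows "cinner a j = 0"
proof -
  have "cinner a (Cy Es H EJ j N0 *v a) = 0"
    using quadratic_form_Cy(1)[of a] unfolding assms by simp
  then have "correlation M (\<lambda>x. cinner a (received x)) w = 0"
    by (simp add: correlation_eq_0_if_self_eq_0 correlation_combiner)
  moreover have "0 < EJ"
    using w_gauss by (simp add: cscg_def)
  ultimately show ?thesis
    by (simp add: correlation_combiner_jammer)
qed

lemma objective_eq:
  "objective M H j s w n \<beta> b a =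
    (cmod \<beta>)\<^sup>2 * ((norm b)\<^sup>2 * Re (cinner a (Cy Es H EJ j N0 *v a)))
    - 2 * Re (\<beta> * (EJ * cinner a j * cinner j b)) + EJ * (norm j)\<^sup>2"
  unfolding objective_def
  by (simp add: integral_norm_diff_square correlation_combiner correlation_combiner_jammer
      correlation_jammer mult_ac)

lemma objective_minimum:
  fixes \<beta> :: complex and a b :: "complex^'m"
  defines "gain \<equiv> (cmod (cinner j b))\<^sup>2 / (norm b)\<^sup>2 *
    ((cmod (cinner j a))\<^sup>2 / Re (cinner a (Cy Es H EJ j N0 *v a)))"
  shows "EJ * (norm j)\<^sup>2 - EJ\<^sup>2 * gain \<le> objective M H j s w n \<beta> b a"
    and "objective M H j s w n (EJ * cinner j a * cinner b j /
        (of_real ((norm b)\<^sup>2) * cinner a (Cy Es H EJ j N0 *v a))) b a = EJ * (norm j)\<^sup>2 - EJ\<^sup>2 * gain"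
proof -
  define q where "q = Re (cinner a (Cy Es H EJ j N0 *v a))"
  define c where "c = EJ * cinner a j * cinner j b"
  have q: "cinner a (Cy Es H EJ j N0 *v a) = of_real q" "0 \<le> q"
    unfolding q_def by (fact quadratic_form_Cy)+
  have degenerate: "(norm b)\<^sup>2 * q = 0 \<Longrightarrow> c = 0"
    using cinner_eq_0_if_quadratic_form_Cy_eq_0[of a] by (auto simp: c_def q_def cinner_def)
  have gain: "(cmod c)\<^sup>2 / ((norm b)\<^sup>2 * q) = EJ\<^sup>2 * gain"
    unfolding gain_def c_def q_def by (simp add: norm_mult power_mult_distrib cmod_cinner_commute)
  have objective: "objective M H j s w n \<beta>' b a =
      (cmod \<beta>')\<^sup>2 * ((norm b)\<^sup>2 * q) - 2 * Re (\<beta>' * c) + EJ * (norm j)\<^sup>2" for \<beta>'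
    by (simp add: objective_eq c_def q_def)
  have "- ((cmod c)\<^sup>2 / ((norm b)\<^sup>2 * q)) \<le> (cmod \<beta>)\<^sup>2 * ((norm b)\<^sup>2 * q) - 2 * Re (\<beta> * c)"
    by (rule complex_quadratic_lower_bound) (use q(2) degenerate in auto)
  then show "EJ * (norm j)\<^sup>2 - EJ\<^sup>2 * gain \<le> objective M H j s w n \<beta> b a"
    unfolding objective gain[symmetric] by linarith
  have optimal_scaling: "EJ * cinner j a * cinner b j / (of_real ((norm b)\<^sup>2) * cinner a (Cy Es H EJ j N0 *v a))
      = cnj c / of_real ((norm b)\<^sup>2 * q)"
    by (simp add: c_def q(1) cnj_cinner)
  show "objective M H j s w n (EJ * cinner j a * cinner b j /
      (of_real ((norm b)\<^sup>2) * cinner a (Cy Es H EJ j N0 *v a))) b a = EJ * (norm j)\<^sup>2 - EJ\<^sup>2 * gain"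
    using complex_quadratic_at_minimizer[of c "(norm b)\<^sup>2 * q"]
    unfolding optimal_scaling objective gain by linarith
qed

end

theorem proposition1:
  fixes M :: "'s measure"
    and H :: "complex^'u^'b" and j :: "complex^'b"
    and s :: "'s \<Rightarrow> complex^'u" and w :: "'s \<Rightarrow> complex" and n :: "'s \<Rightarrow> complex^'b"
    and Es EJ N0 :: real
    and \<A> \<B> :: "complex set"
    and \<beta>h :: complex and bh ah :: "complex^'b"
  assumes P: "prob_space M"
    and s_indep: "prob_space.indep_vars M (\<lambda>_. borel) (\<lambda>i x. s x $ i) UNIV"
    and s_mean: "\<And>i. integrable M (\<lambda>x. s x $ i) \<and> integral\<^sup>L M (\<lambda>x. s x $ i) = 0"
    and s_cov: "\<And>i k. integrable M (\<lambda>x. s x $ i * cnj (s x $ k)) \<and>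
                  integral\<^sup>L M (\<lambda>x. s x $ i * cnj (s x $ k)) = (if i = k then of_real Es else 0)"
    and w_gauss: "cscg M w EJ"
    and n_indep: "prob_space.indep_vars M (\<lambda>_. borel) (\<lambda>i x. n x $ i) UNIV"
    and n_gauss: "\<And>i. cscg M (\<lambda>x. n x $ i) N0"
    and indep_swn: "indep3 M s w n"
    and bh_in: "\<forall>i. bh $ i \<in> \<B>"
    and bh_max: "\<And>b. \<forall>i. b $ i \<in> \<B> \<Longrightarrow>
        (cmod (cinner j b))\<^sup>2 / (norm b)\<^sup>2 \<le> (cmod (cinner j bh))\<^sup>2 / (norm bh)\<^sup>2"
    and ah_in: "\<forall>i. ah $ i \<in> \<A>"
    and ah_max: "\<And>a. \<forall>i. a $ i \<in> \<A> \<Longrightarrow>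
        (cmod (cinner j a))\<^sup>2 / Re (cinner a (Cy Es H EJ j N0 *v a))
          \<le> (cmod (cinner j ah))\<^sup>2 / Re (cinner ah (Cy Es H EJ j N0 *v ah))"
    and \<beta>h_def: "\<beta>h = of_real EJ * cinner j ah * cinner bh j /
        (of_real ((norm bh)\<^sup>2) * cinner ah (Cy Es H EJ j N0 *v ah))"
  shows "\<forall>\<beta> b a. (\<forall>i. b $ i \<in> \<B>) \<longrightarrow> (\<forall>i. a $ i \<in> \<A>) \<longrightarrow>
           objective M H j s w n \<beta>h bh ah \<le> objective M H j s w n \<beta> b a"
proof (intro allI impI)
  \<comment> \<open>Only second moments of \<open>s\<close> enter.\<close>
  fix \<beta> :: complex and b a :: "complex^'b"
  assume b_in: "\<forall>i. b $ i \<in> \<B>" and a_in: "\<forall>i. a $ i \<in> \<A>"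
  interpret jammer_model M H j s w n Es EJ N0
    using P s_mean s_cov w_gauss n_indep n_gauss indep_swn
    unfolding jammer_model_def jammer_model_axioms_def by blast
  define gain where "gain b' a' = (cmod (cinner j b'))\<^sup>2 / (norm b')\<^sup>2 *
    ((cmod (cinner j a'))\<^sup>2 / Re (cinner a' (Cy Es H EJ j N0 *v a')))" for b' a'
  have "gain b a \<le> gain bh ah"
    unfolding gain_def using bh_max[OF b_in] ah_max[OF a_in] quadratic_form_Cy(2)[of a]
    by (intro mult_mono) simp_all
  have "objective M H j s w n \<beta>h bh ah = EJ * (norm j)\<^sup>2 - EJ\<^sup>2 * gain bh ah"
    unfolding \<beta>h_def gain_def by (rule objective_minimum(2))
  also have "\<dots> \<le> EJ * (norm j)\<^sup>2 - EJ\<^sup>2 * gain b a"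
    using \<open>gain b a \<le> gain bh ah\<close> by (simp add: mult_left_mono)
  also have "\<dots> \<le> objective M H j s w n \<beta> b a"
    unfolding gain_def by (rule objective_minimum(1))
  finally show "objective M H j s w n \<beta>h bh ah \<le> objective M H j s w n \<beta> b a" .
qed

end
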